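(* For every real $\kappa>\frac56$ there exists a doubly stochastic $2\times 2$ matrix $\mathcal M_\kappa$ such that no directed $3$-regular multigraph $G$ on $[2]$ has throughput at least $\kappa$ with respect to $\mathcal M_\kappa$ (i.e., no such $G$ hosts $\kappa\mathcal M_\kappa$).
   Context: Let $n\ge 1$ and $[n]=\{1,\dots,n\}$. Networks are finite directed multigraphs on vertex set $[n]$; self-loops and parallel arcs are allowed. A directed multigraph is directed $r$-regular if every vertex has exactly $r$ outgoing and exactly $r$ incoming arcs (a self-loop at $v$ counts as one outgoing and one incoming arc of $v$). A path is a non-empty sequence of arcs $((u_1,v_1),\dots,(u_\ell,v_\ell))$ with $v_i=u_{i+1}$ for $i<\ell$; it goes from $u_1$ to $v_\ell$ and has length $\ell\ge 1$. An $n\times n$ matrix is doubly stochastic if all entries are nonnegative and every row and every column sums to $1$. In a directed $(2n-1)$-regular multigraph $G$ on $[n]$ every arc has capacity $\frac{1}{2n-1}$. $G$ hosts a nonnegative $n\times n$ matrix $\mathcal M=(a_{i,j})$ if there is a finite collection $\{(P_k,d_k)\}$, where each $P_k$ is a path in $G$ from some $s_k$ to some $t_k$ and $d_k\ge 0$, such that $\sum_{k:\,s_k=u,\,t_k=v} d_k=a_{u,v}$ for all $u,v\in[n]$, and for every arc $e$ of $G$ (parallel arcs are distinct) $\sum_{k:\,e\in P_k} d_k\le \frac{1}{2n-1}$. The throughput of $G$ with respect to a doubly stochastic $\mathcal M$ is the largest $\theta$ such that $G$ hosts $\theta\mathcal M$. *)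

theory Defs
  imports Main "HOL.Real"
begin

text \<open>A directed multigraph on vertex set [n] = {1..n} is given by a list of arcs;
  arc number i (for i < length arcs) is the pair arcs ! i = (tail, head).
  Parallel arcs and self-loops are allowed; arcs are identified by their index,
  so parallel arcs are distinct.\<close>

definition multigraph_on :: "nat \<Rightarrow> (nat \<times> nat) list \<Rightarrow> bool" where
  "multigraph_on n arcs \<longleftrightarrow> (\<forall>(u, v) \<in> set arcs. u \<in> {1..n} \<and> v \<in> {1..n})"

definition directed_regular :: "nat \<Rightarrow> nat \<Rightarrow> (nat \<times> nat) list \<Rightarrow> bool" where
  "directed_regular n r arcs \<longleftrightarrow> multigraph_on n arcs \<and>
     (\<forall>v \<in> {1..n}. card {i. i < length arcs \<and> fst (arcs ! i) = v} = r
                  \<and> card {i. i < length arcs \<and> snd (arcs ! i) = v} = r)"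

definition is_path :: "(nat \<times> nat) list \<Rightarrow> nat list \<Rightarrow> bool" where
  "is_path arcs P \<longleftrightarrow> P \<noteq> [] \<and> (\<forall>e \<in> set P. e < length arcs) \<and>
     (\<forall>i. Suc i < length P \<longrightarrow> snd (arcs ! (P ! i)) = fst (arcs ! (P ! Suc i)))"

definition path_src :: "(nat \<times> nat) list \<Rightarrow> nat list \<Rightarrow> nat" where
  "path_src arcs P = fst (arcs ! hd P)"

definition path_tgt :: "(nat \<times> nat) list \<Rightarrow> nat list \<Rightarrow> nat" where
  "path_tgt arcs P = snd (arcs ! last P)"

text \<open>n x n matrices are functions nat => nat => real, read on indices in {1..n}.\<close>

definition doubly_stochastic :: "nat \<Rightarrow> (nat \<Rightarrow> nat \<Rightarrow> real) \<Rightarrow> bool" where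
  "doubly_stochastic n M \<longleftrightarrow>
     (\<forall>i \<in> {1..n}. \<forall>j \<in> {1..n}. M i j \<ge> 0) \<and>
     (\<forall>i \<in> {1..n}. (\<Sum>j = 1..n. M i j) = 1) \<and>
     (\<forall>j \<in> {1..n}. (\<Sum>i = 1..n. M i j) = 1)"

definition hosts :: "nat \<Rightarrow> (nat \<times> nat) list \<Rightarrow> (nat \<Rightarrow> nat \<Rightarrow> real) \<Rightarrow> bool" where
  "hosts n arcs a \<longleftrightarrow> (\<exists>F :: (nat list \<times> real) list.
     (\<forall>k < length F. is_path arcs (fst (F ! k)) \<and> snd (F ! k) \<ge> 0) \<and>
     (\<forall>u \<in> {1..n}. \<forall>v \<in> {1..n}.
        (\<Sum>k \<in> {k. k < length F \<and> path_src arcs (fst (F ! k)) = u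
                              \<and> path_tgt arcs (fst (F ! k)) = v}. snd (F ! k)) = a u v) \<and>
     (\<forall>e < length arcs.
        (\<Sum>k \<in> {k. k < length F \<and> e \<in> set (fst (F ! k))}. snd (F ! k))
          \<le> 1 / (2 * real n - 1)))"

end

theory Submission
  imports Defs
begin

text \<open>Take \<open>\<M>\<close> with diagonal entries 3/5 and off-diagonal entries 2/5, and let \<open>c\<close> be the
  number of arcs from 1 to 2 in a 3-regular multigraph on [2]; every arc has capacity 1/3.
  Each path from 1 to 2 uses one of these \<open>c\<close> arcs, so \<open>2\<kappa>/5 \<le> c/3\<close>.  Each path starting
  at 1 or ending at 2 uses an arc with tail 1 or head 2, and there are \<open>6 - c\<close> such arcs, so
  \<open>8\<kappa>/5 \<le> (6 - c)/3\<close>.  As \<open>c\<close> is an integer, one of the two bounds forces \<open>\<kappa> \<le> 5/6\<close>.\<close>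

lemma is_path_ConsD:
  assumes "is_path arcs (e # P)" "P \<noteq> []"
  shows "is_path arcs P" "snd (arcs ! e) = fst (arcs ! hd P)"
  using assms unfolding is_path_def by (auto simp: hd_conv_nth)

lemma path_leaves_set:
  assumes "is_path arcs P" "path_src arcs P \<in> S" "path_tgt arcs P \<notin> S"
  shows "\<exists>e \<in> set P. fst (arcs ! e) \<in> S \<and> snd (arcs ! e) \<notin> S"
  using assms
proof (induction P)
  case Nil
  then show ?case by (simp add: is_path_def)
next
  case (Cons e P)
  show ?case
  proof (cases "P = [] \<or> snd (arcs ! e) \<notin> S")
    case True
    then show ?thesis using Cons.prems by (auto simp: path_src_def path_tgt_def)
  next
    case False
    then have "P \<noteq> []" "snd (arcs ! e) \<in> S" by auto
    with Cons.prems have "is_path arcs P" "path_src arcs P \<in> S" "path_tgt arcs P \<notin> S"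
      using is_path_ConsD[of arcs e P] by (auto simp: path_src_def path_tgt_def)
    then show ?thesis using Cons.IH by auto
  qed
qed

lemma sum_le_double_counting:
  fixes w :: "'i \<Rightarrow> real"
  assumes "finite I" "finite E" "\<forall>i \<in> I. w i \<ge> 0" "\<forall>i \<in> I. \<exists>e \<in> E. covers i e"
  shows "sum w I \<le> (\<Sum>e \<in> E. \<Sum>i \<in> {i \<in> I. covers i e}. w i)"
proof -
  have "sum w I \<le> (\<Sum>i \<in> I. \<Sum>e \<in> E. if covers i e then w i else 0)"
  proof (rule sum_mono)
    fix i assume "i \<in> I"
    with assms obtain e where "e \<in> E" "covers i e" "w i \<ge> 0" by blast
    then show "w i \<le> (\<Sum>e \<in> E. if covers i e then w i else 0)"
      using member_le_sum[of e E "\<lambda>e. if covers i e then w i else 0"] assms(2) by auto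
  qed
  also have "\<dots> = (\<Sum>e \<in> E. \<Sum>i \<in> I. if covers i e then w i else 0)"
    by (rule sum.swap)
  also have "\<dots> = (\<Sum>e \<in> E. \<Sum>i \<in> {i \<in> I. covers i e}. w i)"
    using assms(1) by (simp add: sum.inter_filter)
  finally show ?thesis .
qed

lemma hosts_demand_le_hitting_arcs:
  assumes "hosts n arcs a" "D \<subseteq> {1..n} \<times> {1..n}" "E \<subseteq> {..<length arcs}"
    and meets: "\<And>P. is_path arcs P \<Longrightarrow> (path_src arcs P, path_tgt arcs P) \<in> D \<Longrightarrow>
                     \<exists>e \<in> E. e \<in> set P"
  shows "(\<Sum>(u, v) \<in> D. a u v) \<le> card E / (2 * real n - 1)"
proof -
  obtain F :: "(nat list \<times> real) list" where
    paths: "\<forall>k < length F. is_path arcs (fst (F ! k)) \<and> snd (F ! k) \<ge> 0" and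
    demand: "\<forall>u \<in> {1..n}. \<forall>v \<in> {1..n}.
        (\<Sum>k \<in> {k. k < length F \<and> path_src arcs (fst (F ! k)) = u
                              \<and> path_tgt arcs (fst (F ! k)) = v}. snd (F ! k)) = a u v" and
    capacity: "\<forall>e < length arcs.
        (\<Sum>k \<in> {k. k < length F \<and> e \<in> set (fst (F ! k))}. snd (F ! k))
          \<le> 1 / (2 * real n - 1)"
    using assms(1) unfolding hosts_def by blast
  define ends where "ends k = (path_src arcs (fst (F ! k)), path_tgt arcs (fst (F ! k)))" for k
  define K where "K = {k. k < length F \<and> ends k \<in> D}"
  have finite_D: "finite D" and finite_E: "finite E"
    using finite_subset[OF assms(2)] finite_subset[OF assms(3)] by auto
  have "(\<Sum>(u, v) \<in> D. a u v) = (\<Sum>d \<in> D. \<Sum>k \<in> {k \<in> K. ends k = d}. snd (F ! k))"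
  proof (rule sum.cong)
    fix d assume "d \<in> D"
    then obtain u v where uv: "d = (u, v)" "u \<in> {1..n}" "v \<in> {1..n}"
      using assms(2) by blast
    have "{k \<in> K. ends k = d} = {k. k < length F \<and> path_src arcs (fst (F ! k)) = u
                                   \<and> path_tgt arcs (fst (F ! k)) = v}"
      using \<open>d \<in> D\<close> uv(1) by (auto simp: K_def ends_def)
    then show "(case d of (u, v) \<Rightarrow> a u v) = (\<Sum>k \<in> {k \<in> K. ends k = d}. snd (F ! k))"
      using demand uv by simp
  qed simp
  also have "\<dots> = (\<Sum>k \<in> K. snd (F ! k))"
    by (rule sum.group) (use finite_D in \<open>auto simp: K_def\<close>)
  also have "\<dots> \<le> (\<Sum>e \<in> E. \<Sum>k \<in> {k \<in> K. e \<in> set (fst (F ! k))}. snd (F ! k))"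
    by (rule sum_le_double_counting)
      (use paths meets finite_E in \<open>auto simp: K_def ends_def\<close>)
  also have "\<dots> \<le> (\<Sum>e \<in> E. 1 / (2 * real n - 1))"
  proof (rule sum_mono)
    fix e assume "e \<in> E"
    have "(\<Sum>k \<in> {k \<in> K. e \<in> set (fst (F ! k))}. snd (F ! k))
        \<le> (\<Sum>k \<in> {k. k < length F \<and> e \<in> set (fst (F ! k))}. snd (F ! k))"
      by (rule sum_mono2) (use paths in \<open>auto simp: K_def\<close>)
    also have "\<dots> \<le> 1 / (2 * real n - 1)"
      using capacity \<open>e \<in> E\<close> assms(3) by auto
    finally show "(\<Sum>k \<in> {k \<in> K. e \<in> set (fst (F ! k))}. snd (F ! k)) \<le> 1 / (2 * real n - 1)" .
  qed
  finally show ?thesis by simp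
qed

lemma card_tail_or_head:
  assumes "directed_regular n r arcs" "u \<in> {1..n}" "v \<in> {1..n}"
  shows "card {e. e < length arcs \<and> (fst (arcs ! e) = u \<or> snd (arcs ! e) = v)}
           + card {e. e < length arcs \<and> arcs ! e = (u, v)} = 2 * r"
proof -
  let ?T = "{e. e < length arcs \<and> fst (arcs ! e) = u}"
  let ?H = "{e. e < length arcs \<and> snd (arcs ! e) = v}"
  have "?T \<union> ?H = {e. e < length arcs \<and> (fst (arcs ! e) = u \<or> snd (arcs ! e) = v)}"
       "?T \<inter> ?H = {e. e < length arcs \<and> arcs ! e = (u, v)}"
    by (auto simp: prod_eq_iff)
  moreover have "card ?T = r" "card ?H = r"
    using assms unfolding directed_regular_def by auto
  ultimately show ?thesis
    using card_Un_Int[of ?T ?H] by simp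
qed

lemma hosts_cut_bound:
  assumes "hosts n arcs a" "u \<in> {1..n}" "v \<in> {1..n}" "u \<in> S" "v \<notin> S"
  shows "a u v \<le> card {e. e < length arcs \<and> fst (arcs ! e) \<in> S \<and> snd (arcs ! e) \<notin> S}
                    / (2 * real n - 1)"
proof -
  define E where "E = {e. e < length arcs \<and> fst (arcs ! e) \<in> S \<and> snd (arcs ! e) \<notin> S}"
  have "\<exists>e \<in> E. e \<in> set P"
    if "is_path arcs P" "path_src arcs P = u" "path_tgt arcs P = v" for P
    using path_leaves_set[of arcs P S] that assms(4,5) by (auto simp: E_def is_path_def)
  then show ?thesis
    using hosts_demand_le_hitting_arcs[OF assms(1), of "{(u, v)}" E] assms(2,3) by (auto simp: E_def)
qed

lemma hosts_tail_or_head_bound: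
  assumes "directed_regular n r arcs" "hosts n arcs a" "u \<in> {1..n}" "v \<in> {1..n}"
    and "D \<subseteq> {1..n} \<times> {1..n}" "\<forall>(x, y) \<in> D. x = u \<or> y = v"
  shows "(\<Sum>(x, y) \<in> D. a x y)
           \<le> (2 * real r - card {e. e < length arcs \<and> arcs ! e = (u, v)}) / (2 * real n - 1)"
proof -
  define E where "E = {e. e < length arcs \<and> (fst (arcs ! e) = u \<or> snd (arcs ! e) = v)}"
  have "\<exists>e \<in> E. e \<in> set P"
    if P: "is_path arcs P" "(path_src arcs P, path_tgt arcs P) \<in> D" for P
  proof -
    have "hd P \<in> set P" "last P \<in> set P" "set P \<subseteq> {..<length arcs}"
      using P(1) by (auto simp: is_path_def)
    then have "hd P \<in> E \<or> last P \<in> E"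
      using P(2) assms(6) by (auto simp: E_def path_src_def path_tgt_def)
    then show ?thesis
      using \<open>hd P \<in> set P\<close> \<open>last P \<in> set P\<close> by blast
  qed
  then have "(\<Sum>(x, y) \<in> D. a x y) \<le> card E / (2 * real n - 1)"
    using hosts_demand_le_hitting_arcs[OF assms(2,5), of E] by (auto simp: E_def)
  moreover have "card E + card {e. e < length arcs \<and> arcs ! e = (u, v)} = 2 * r"
    using card_tail_or_head[OF assms(1,3,4)] by (simp add: E_def)
  then have "real (card E) = 2 * real r - card {e. e < length arcs \<and> arcs ! e = (u, v)}"
    by linarith
  ultimately show ?thesis
    by simp
qed

theorem proposition3p4:
  fixes \<kappa> :: real
  assumes "\<kappa> > 5 / 6"
  shows "\<exists>M. doubly_stochastic 2 M \<and>
           \<not> (\<exists>arcs. directed_regular 2 3 arcs \<and> hosts 2 arcs (\<lambda>i j. \<kappa> * M i j))"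
proof -
  define M :: "nat \<Rightarrow> nat \<Rightarrow> real" where "M i j = (if i = j then 3/5 else 2/5)" for i j
  have "\<not> hosts 2 arcs (\<lambda>i j. \<kappa> * M i j)" if regular: "directed_regular 2 3 arcs" for arcs
  proof
    assume hosts: "hosts 2 arcs (\<lambda>i j. \<kappa> * M i j)"
    define c where "c = card {e. e < length arcs \<and> arcs ! e = (1, 2)}"
    have "{e. e < length arcs \<and> fst (arcs ! e) \<in> {1} \<and> snd (arcs ! e) \<notin> {1}}
            = {e. e < length arcs \<and> arcs ! e = (1, 2)}"
      using regular nth_mem unfolding directed_regular_def multigraph_on_def
      by (fastforce simp: prod_eq_iff)
    then have "\<kappa> * M 1 2 \<le> c / 3"
      using hosts_cut_bound[OF hosts, of 1 2 "{1}"] by (simp add: c_def)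
    moreover have "\<kappa> * M 1 1 + (\<kappa> * M 1 2 + \<kappa> * M 2 2) \<le> (6 - real c) / 3"
      using hosts_tail_or_head_bound[OF regular hosts, of 1 2 "{(1, 1), (1, 2), (2, 2)}"]
      by (simp add: c_def)
    ultimately show False
      using assms by (cases "c \<le> 1") (auto simp: M_def)
  qed
  moreover have "doubly_stochastic 2 M"
    unfolding doubly_stochastic_def M_def by (auto simp: numeral_2_eq_2)
  ultimately show ?thesis by blast
qed

end
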